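(* Let $\mathrm{opt}$ be the cost of an optimal solution and $\mathrm{opt}_{LP}$ the optimum value of the linear program LP-CVRP-MD described in the context, and let $(x,z)$ be an optimal solution of that LP. Define $\delta$ by $\sum_{r \in R}\sum_{v \in C} 2\,c(v,r)\, z^r_{v,v} = (1-\delta)\,\mathrm{opt}_{LP}$. Then $\mathrm{opt}_{LP} \le \mathrm{opt}$ and $\mathrm{lb} \le (1-\delta)\,\mathrm{opt}_{LP}$, where $\mathrm{lb} = \frac{2}{k}\sum_{v \in C} c(v,R)$.
   Context: Problem (Capacitated Vehicle Routing with Multiple Depots): nonempty disjoint finite sets $C$ (clients) and $R$ (depots), $V = C \cup R$, a metric $c$ on $V$, and an integer capacity $k \ge 1$. A feasible solution is a collection of tours, each starting and ending at a depot and visiting at most $k$ clients, such that every client is on some tour; its cost is the total edge cost; $\mathrm{opt}$ is the minimum cost. It is assumed that $c(v,R) := \min_{r \in R} c(v,r) > 0$ for every client $v$. Consider the complete bidirected graph on $V$ (each unordered pair $\{a,b\}$ gives directed edges $(a,b)$ and $(b,a)$, each of cost $c(a,b)$). For a vector $y$ on directed edges and $S \subseteq V$, $y(\delta^{in}(S))$ and $y(\delta^{out}(S))$ denote the sums of $y$ over directed edges entering, resp. leaving, $S$ (for a single vertex $u$ write $\delta^{in}(u)$, $\delta^{out}(u)$). LP-CVRP-MD has variables $x^r_{v,e} \ge 0$ for $r \in R$, $v \in C$, directed edges $e$, and $z^r_{v,u} \ge 0$ for $r \in R$, $v \in C$, $u \in V$; write $x^r_v$ for the vector $(x^r_{v,e})_e$.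 It minimizes $\sum_{r \in R}\sum_{v \in C}\sum_e c(e)\, x^r_{v,e}$ subject to: (1) for all $r \in R$, $v \in C$, $u \in V$: $x^r_v(\delta^{out}(u))$ equals $2 z^r_{v,v}$ if $u = r$, equals $0$ if $u = v$, and equals $z^r_{v,u}$ otherwise; (2) for all $r \in R$, $v \in C$, $u \in V$: $x^r_v(\delta^{in}(u))$ equals $0$ if $u = r$, equals $2 z^r_{v,v}$ if $u = v$, and equals $z^r_{v,u}$ otherwise; (3) $x^r_v(\delta^{in}(S)) \ge z^r_{v,u}$ for all $r \in R$, $v \in C$, $u \in V$ and all $S$ with $u \in S \subseteq V \setminus \{r\}$; (4) $\sum_{r \in R}\sum_{v \in C} z^r_{v,u} = 1$ for every client $u \in C$; (5) $z^r_{v,u} \le z^r_{v,v}$ for all $r \in R$, $u,v \in C$; (6) $z^r_{v,u} = 0$ for all $r \in R$, $u,v \in C$ with $c(u,r) > c(v,r)$; (7) $\sum_{u \in C} z^r_{v,u} \le k\, z^r_{v,v}$ for all $r \in R$, $v \in C$. Its optimum value is $\mathrm{opt}_{LP}$. *)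

theory Defs
  imports "HOL-Analysis.Analysis"
begin

definition metric_on :: "'a set \<Rightarrow> ('a \<Rightarrow> 'a \<Rightarrow> real) \<Rightarrow> bool" where
  "metric_on V c \<longleftrightarrow>
     (\<forall>a\<in>V. c a a = 0) \<and>
     (\<forall>a\<in>V. \<forall>b\<in>V. 0 \<le> c a b \<and> c a b = c b a) \<and>
     (\<forall>a\<in>V. \<forall>b\<in>V. \<forall>d\<in>V. c a d \<le> c a b + c b d)"

definition dist_set :: "('a \<Rightarrow> 'a \<Rightarrow> real) \<Rightarrow> 'a \<Rightarrow> 'a set \<Rightarrow> real" where
  "dist_set c v R = Min ((\<lambda>r. c v r) ` R)"

fun walk_cost :: "('a \<Rightarrow> 'a \<Rightarrow> real) \<Rightarrow> 'a list \<Rightarrow> real" where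
  "walk_cost c (a # b # xs) = c a b + walk_cost c (b # xs)"
| "walk_cost c _ = 0"

text \<open>A tour is a depot r together with the sequence of clients visited;
  it is the closed walk r, v1, ..., vm, r.\<close>
definition tour_cost :: "('a \<Rightarrow> 'a \<Rightarrow> real) \<Rightarrow> 'a \<times> 'a list \<Rightarrow> real" where
  "tour_cost c t = walk_cost c (fst t # snd t @ [fst t])"

definition cvrp_feasible ::
  "'a set \<Rightarrow> 'a set \<Rightarrow> nat \<Rightarrow> ('a \<times> 'a list) list \<Rightarrow> bool" where
  "cvrp_feasible C R k T \<longleftrightarrow>
     (\<forall>t\<in>set T. fst t \<in> R \<and> set (snd t) \<subseteq> C \<and> card (set (snd t)) \<le> k) \<and>
     (\<forall>u\<in>C. \<exists>t\<in>set T. u \<in> set (snd t))"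

definition sol_cost :: "('a \<Rightarrow> 'a \<Rightarrow> real) \<Rightarrow> ('a \<times> 'a list) list \<Rightarrow> real" where
  "sol_cost c T = (\<Sum>t\<leftarrow>T. tour_cost c t)"

definition cvrp_opt :: "'a set \<Rightarrow> 'a set \<Rightarrow> ('a \<Rightarrow> 'a \<Rightarrow> real) \<Rightarrow> nat \<Rightarrow> real" where
  "cvrp_opt C R c k = Inf (sol_cost c ` {T. cvrp_feasible C R k T})"

definition dedges :: "'a set \<Rightarrow> ('a \<times> 'a) set" where
  "dedges V = {(a, b). a \<in> V \<and> b \<in> V \<and> a \<noteq> b}"

definition delta_in :: "'a set \<Rightarrow> 'a set \<Rightarrow> ('a \<times> 'a) set" where
  "delta_in V S = {(a, b) \<in> dedges V. a \<notin> S \<and> b \<in> S}"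

definition delta_out :: "'a set \<Rightarrow> 'a set \<Rightarrow> ('a \<times> 'a) set" where
  "delta_out V S = {(a, b) \<in> dedges V. a \<in> S \<and> b \<notin> S}"

text \<open>x r v e = x^r_{v,e};  z r v u = z^r_{v,u}.\<close>
definition lp_feasible ::
  "'a set \<Rightarrow> 'a set \<Rightarrow> ('a \<Rightarrow> 'a \<Rightarrow> real) \<Rightarrow> nat \<Rightarrow>
   ('a \<Rightarrow> 'a \<Rightarrow> 'a \<times> 'a \<Rightarrow> real) \<Rightarrow> ('a \<Rightarrow> 'a \<Rightarrow> 'a \<Rightarrow> real) \<Rightarrow> bool" where
  "lp_feasible C R c k x z \<longleftrightarrow>
     (let V = C \<union> R in
     (\<forall>r\<in>R. \<forall>v\<in>C. \<forall>e\<in>dedges V. 0 \<le> x r v e) \<and>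
     (\<forall>r\<in>R. \<forall>v\<in>C. \<forall>u\<in>V. 0 \<le> z r v u) \<and>
     \<comment> \<open>(1)\<close>
     (\<forall>r\<in>R. \<forall>v\<in>C. \<forall>u\<in>V.
        (\<Sum>e\<in>delta_out V {u}. x r v e) =
          (if u = r then 2 * z r v v else if u = v then 0 else z r v u)) \<and>
     \<comment> \<open>(2)\<close>
     (\<forall>r\<in>R. \<forall>v\<in>C. \<forall>u\<in>V.
        (\<Sum>e\<in>delta_in V {u}. x r v e) =
          (if u = r then 0 else if u = v then 2 * z r v v else z r v u)) \<and>
     \<comment> \<open>(3)\<close>
     (\<forall>r\<in>R. \<forall>v\<in>C. \<forall>u\<in>V. \<forall>S. u \<in> S \<and> S \<subseteq> V - {r} \<longrightarrow>
        (\<Sum>e\<in>delta_in V S. x r v e) \<ge> z r v u) \<and>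
     \<comment> \<open>(4)\<close>
     (\<forall>u\<in>C. (\<Sum>r\<in>R. \<Sum>v\<in>C. z r v u) = 1) \<and>
     \<comment> \<open>(5)\<close>
     (\<forall>r\<in>R. \<forall>u\<in>C. \<forall>v\<in>C. z r v u \<le> z r v v) \<and>
     \<comment> \<open>(6)\<close>
     (\<forall>r\<in>R. \<forall>u\<in>C. \<forall>v\<in>C. c u r > c v r \<longrightarrow> z r v u = 0) \<and>
     \<comment> \<open>(7)\<close>
     (\<forall>r\<in>R. \<forall>v\<in>C. (\<Sum>u\<in>C. z r v u) \<le> real k * z r v v))"

definition lp_cost ::
  "'a set \<Rightarrow> 'a set \<Rightarrow> ('a \<Rightarrow> 'a \<Rightarrow> real) \<Rightarrow> ('a \<Rightarrow> 'a \<Rightarrow> 'a \<times> 'a \<Rightarrow> real) \<Rightarrow> real" where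
  "lp_cost C R c x = (\<Sum>r\<in>R. \<Sum>v\<in>C. \<Sum>e\<in>dedges (C \<union> R). c (fst e) (snd e) * x r v e)"

definition lp_opt :: "'a set \<Rightarrow> 'a set \<Rightarrow> ('a \<Rightarrow> 'a \<Rightarrow> real) \<Rightarrow> nat \<Rightarrow> real" where
  "lp_opt C R c k = Inf {lp_cost C R c x | x z. lp_feasible C R c k x z}"

definition lp_optimal ::
  "'a set \<Rightarrow> 'a set \<Rightarrow> ('a \<Rightarrow> 'a \<Rightarrow> real) \<Rightarrow> nat \<Rightarrow>
   ('a \<Rightarrow> 'a \<Rightarrow> 'a \<times> 'a \<Rightarrow> real) \<Rightarrow> ('a \<Rightarrow> 'a \<Rightarrow> 'a \<Rightarrow> real) \<Rightarrow> bool" where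
  "lp_optimal C R c k x z \<longleftrightarrow> lp_feasible C R c k x z \<and>
     (\<forall>x' z'. lp_feasible C R c k x' z' \<longrightarrow> lp_cost C R c x \<le> lp_cost C R c x')"

end

theory Submission
  imports Defs "HOL-Library.Sublist"
begin

text \<open>For \<open>opt\<^sub>L\<^sub>P \<le> opt\<close>, prune a feasible solution so that every client lies on exactly
  one tour, and split each tour from depot \<open>r\<close> at its client \<open>v\<close> farthest from \<open>r\<close> into two
  \<open>r\<close>-\<open>v\<close> paths. Their edge counts solve the commodity \<open>(r, v)\<close> of the LP with \<open>z\<^sup>r\<^sub>v\<close> the
  indicator of the clients of the tour, at the cost of the tour; summing over the tours gives a
  feasible LP solution. For the second bound, constraint (6) lets every client \<open>u\<close> charge
  \<open>c(u, R) \<le> c(v, r)\<close> to each commodity \<open>(r, v)\<close> serving it, and by (7) the charge to \<open>(r, v)\<close> is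
  at most \<open>k c(v, r) z\<^sup>r\<^sub>v\<^sub>,\<^sub>v\<close>.\<close>

section \<open>Walks in a metric\<close>

lemma metric_onD:
  assumes "metric_on V c"
  shows "a \<in> V \<Longrightarrow> c a a = 0"
    and "a \<in> V \<Longrightarrow> b \<in> V \<Longrightarrow> 0 \<le> c a b"
    and "a \<in> V \<Longrightarrow> b \<in> V \<Longrightarrow> c a b = c b a"
    and "a \<in> V \<Longrightarrow> b \<in> V \<Longrightarrow> d \<in> V \<Longrightarrow> c a d \<le> c a b + c b d"
  using assms unfolding metric_on_def by auto

fun walk_edges :: "'a list \<Rightarrow> ('a \<times> 'a) list" where
  "walk_edges (a # b # xs) = (a, b) # walk_edges (b # xs)"
| "walk_edges _ = []"

lemma walk_cost_eq_sum_list_walk_edges: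
  "walk_cost c A = (\<Sum>e\<leftarrow>walk_edges A. c (fst e) (snd e))"
  by (induction A rule: walk_edges.induct) auto

lemma walk_cost_append_Cons:
  "walk_cost c (xs @ v # ys) = walk_cost c (xs @ [v]) + walk_cost c (v # ys)"
  by (induction xs rule: walk_edges.induct) auto

lemma walk_cost_rev:
  assumes "metric_on V c" "set A \<subseteq> V"
  shows "walk_cost c (rev A) = walk_cost c A"
  using assms(2)
proof (induction A rule: walk_edges.induct)
  case (1 a b xs)
  have "walk_cost c (rev (a # b # xs)) = walk_cost c (rev (b # xs)) + c b a"
    using walk_cost_append_Cons[of c "rev xs" b "[a]"] by simp
  also have "\<dots> = walk_cost c (b # xs) + c a b"
    using 1 metric_onD(3)[OF assms(1)] by auto
  finally show ?case by simp
qed auto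

lemma dist_le_walk_cost:
  assumes "metric_on V c" "set xs \<subseteq> V" "a \<in> V" "b \<in> V"
  shows "c a b \<le> walk_cost c (a # xs @ [b])"
  using assms(2,3)
proof (induction xs arbitrary: a)
  case (Cons y xs)
  then have "c y b \<le> walk_cost c (y # xs @ [b])" by auto
  moreover have "c a b \<le> c a y + c y b" using metric_onD(4)[OF assms(1)] Cons.prems assms(4) by auto
  ultimately show ?case by simp
qed simp

lemma set_subseq_subset: "subseq ys xs \<Longrightarrow> set ys \<subseteq> set xs"
  by (induction rule: list_emb.induct) auto

lemma walk_cost_subseq_mono:
  assumes "metric_on V c" "subseq ys xs" "set xs \<subseteq> V" "a \<in> V" "b \<in> V"
  shows "walk_cost c (a # ys @ [b]) \<le> walk_cost c (a # xs @ [b])"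
  using assms(2-4)
proof (induction arbitrary: a rule: list_emb.induct)
  case (list_emb_Nil xs)
  then show ?case using dist_le_walk_cost[OF assms(1) _ _ assms(5)] by simp
next
  case (list_emb_Cons ys xs y)
  have IH: "walk_cost c (y # ys @ [b]) \<le> walk_cost c (y # xs @ [b])"
    using list_emb_Cons.IH list_emb_Cons.prems by simp
  obtain w ws where w: "ys @ [b] = w # ws" by (cases ys) auto
  have "set ys \<subseteq> set xs"
    using list_emb_Cons.hyps by (rule set_subseq_subset)
  then have "w \<in> V" using w list_emb_Cons.prems assms(5) by (cases ys) auto
  then have "c a w \<le> c a y + c y w"
    using metric_onD(4)[OF assms(1)] list_emb_Cons.prems by simp
  then show ?case using IH w by simp
next
  case (list_emb_Cons2 x y ys xs)
  then show ?case by simp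
qed

section \<open>Edge counts of simple paths\<close>

lemma walk_edges_subset_dedges:
  "distinct A \<Longrightarrow> set A \<subseteq> V \<Longrightarrow> set (walk_edges A) \<subseteq> dedges V"
  by (induction A rule: walk_edges.induct) (auto simp: dedges_def)

lemma length_filter_fst_walk_edges:
  "distinct A \<Longrightarrow> length (filter (\<lambda>e. fst e = u) (walk_edges A)) = of_bool (u \<in> set (butlast A))"
proof (induction A rule: walk_edges.induct)
  case (1 a b xs)
  have "a \<notin> set (butlast (b # xs))" using 1(2) by (auto dest: in_set_butlastD)
  moreover have "set (butlast (a # b # xs)) = insert a (set (butlast (b # xs)))" by simp
  ultimately show ?case using 1 by (cases "u = a") (simp_all del: butlast.simps)
qed auto

lemma length_filter_snd_walk_edges:
  "distinct A \<Longrightarrow> length (filter (\<lambda>e. snd e = u) (walk_edges A)) = of_bool (u \<in> set (tl A))"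
  by (induction A rule: walk_edges.induct) auto

lemma walk_edges_enter:
  assumes "hd A \<notin> S" "w \<in> set A" "w \<in> S"
  shows "\<exists>e\<in>set (walk_edges A). fst e \<notin> S \<and> snd e \<in> S"
  using assms
proof (induction A rule: walk_edges.induct)
  case (1 a b xs)
  then show ?case by (cases "b \<in> S") auto
qed auto

lemma sum_count_list_eq_sum_list_filter:
  assumes "finite D"
  shows "(\<Sum>e\<in>D. f e * real (count_list E e)) = (\<Sum>e\<leftarrow>filter (\<lambda>e. e \<in> D) E. f e)"
proof (induction E)
  case (Cons a E)
  have "(\<Sum>e\<in>D. f e * real (count_list (a # E) e))
      = (\<Sum>e\<in>D. f e * real (count_list E e)) + (\<Sum>e\<in>D. if e = a then f e else 0)"
    unfolding sum.distrib[symmetric] by (rule sum.cong) (auto simp: algebra_simps)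
  also have "\<dots> = (\<Sum>e\<leftarrow>filter (\<lambda>e. e \<in> D) E. f e) + (if a \<in> D then f a else 0)"
    using Cons.IH assms by simp
  also have "\<dots> = (\<Sum>e\<leftarrow>filter (\<lambda>e. e \<in> D) (a # E). f e)"
    by simp
  finally show ?case .
qed simp

lemma finite_dedges: "finite V \<Longrightarrow> finite (dedges V)"
  by (rule finite_subset[of _ "V \<times> V"]) (auto simp: dedges_def)

lemma finite_delta_out: "finite V \<Longrightarrow> finite (delta_out V S)"
  by (rule finite_subset[OF _ finite_dedges]) (auto simp: delta_out_def)

lemma finite_delta_in: "finite V \<Longrightarrow> finite (delta_in V S)"
  by (rule finite_subset[OF _ finite_dedges]) (auto simp: delta_in_def)

lemma sum_count_list_eq_length_filter:
  "finite D \<Longrightarrow> (\<Sum>e\<in>D. real (count_list E e)) = real (length (filter (\<lambda>e. e \<in> D) E))"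
  using sum_count_list_eq_sum_list_filter[of D "\<lambda>_. 1" E] by (simp add: sum_list_triv)

context
  fixes V :: "'a set" and A :: "'a list"
  assumes finite: "finite V" and distinct: "distinct A" and subset: "set A \<subseteq> V"
begin

lemma sum_delta_out_count_walk_edges:
  "(\<Sum>e\<in>delta_out V {u}. real (count_list (walk_edges A) e)) = of_bool (u \<in> set (butlast A))"
proof -
  have "filter (\<lambda>e. e \<in> delta_out V {u}) (walk_edges A) = filter (\<lambda>e. fst e = u) (walk_edges A)"
    using walk_edges_subset_dedges[OF distinct subset]
    by (intro filter_cong) (auto simp: delta_out_def dedges_def)
  then show ?thesis
    using sum_count_list_eq_length_filter[OF finite_delta_out[OF finite]]
      length_filter_fst_walk_edges[OF distinct] by simp
qed

lemma sum_delta_in_count_walk_edges: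
  "(\<Sum>e\<in>delta_in V {u}. real (count_list (walk_edges A) e)) = of_bool (u \<in> set (tl A))"
proof -
  have "filter (\<lambda>e. e \<in> delta_in V {u}) (walk_edges A) = filter (\<lambda>e. snd e = u) (walk_edges A)"
    using walk_edges_subset_dedges[OF distinct subset]
    by (intro filter_cong) (auto simp: delta_in_def dedges_def)
  then show ?thesis
    using sum_count_list_eq_length_filter[OF finite_delta_in[OF finite]]
      length_filter_snd_walk_edges[OF distinct] by simp
qed

lemma one_le_sum_delta_in_count_walk_edges:
  assumes "hd A \<notin> S" "w \<in> set A" "w \<in> S"
  shows "1 \<le> (\<Sum>e\<in>delta_in V S. real (count_list (walk_edges A) e))"
proof -
  obtain e where e: "e \<in> set (walk_edges A)" "fst e \<notin> S" "snd e \<in> S"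
    using walk_edges_enter[OF assms] by blast
  then have "e \<in> delta_in V S"
    using walk_edges_subset_dedges[OF distinct subset] by (auto simp: delta_in_def)
  moreover have "1 \<le> real (count_list (walk_edges A) e)"
    using e(1) count_list_0_iff[of "walk_edges A" e] by linarith
  ultimately show ?thesis
    using member_le_sum[of e "delta_in V S" "\<lambda>e. real (count_list (walk_edges A) e)"]
      finite_delta_in[OF finite] by fastforce
qed

lemma sum_dedges_cost_count_walk_edges:
  "(\<Sum>e\<in>dedges V. c (fst e) (snd e) * real (count_list (walk_edges A) e)) = walk_cost c A"
proof -
  have "filter (\<lambda>e. e \<in> dedges V) (walk_edges A) = walk_edges A"
    using walk_edges_subset_dedges[OF distinct subset] by (auto simp: filter_id_conv)
  then show ?thesis
    using sum_count_list_eq_sum_list_filter[OF finite_dedges[OF finite]]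
    by (simp add: walk_cost_eq_sum_list_walk_edges)
qed

end

text \<open>Constraints (1) and (2) ask commodity \<open>(r, v)\<close> to leave \<open>r\<close> and enter \<open>v\<close> twice, so the tour
  \<open>r, P1, v, P2, r\<close> is recast as two \<open>r\<close>-\<open>v\<close> paths, the second one traversing \<open>P2\<close> backwards.\<close>
definition split_tour_flow :: "'a \<Rightarrow> 'a list \<Rightarrow> 'a \<Rightarrow> 'a list \<Rightarrow> 'a \<times> 'a \<Rightarrow> real" where
  "split_tour_flow r P1 v P2 e =
     real (count_list (walk_edges (r # P1 @ [v])) e) + real (count_list (walk_edges (r # rev P2 @ [v])) e)"

context
  fixes V :: "'a set" and r v :: 'a and P1 P2 :: "'a list"
  assumes finite: "finite V" and distinct: "distinct (r # P1 @ v # P2)"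
    and subset: "set (r # P1 @ v # P2) \<subseteq> V"
begin

lemma split_tour_paths:
  "distinct (r # P1 @ [v])" "set (r # P1 @ [v]) \<subseteq> V"
  "distinct (r # rev P2 @ [v])" "set (r # rev P2 @ [v]) \<subseteq> V"
  using distinct subset by auto

lemma sum_delta_out_split_tour_flow:
  "(\<Sum>e\<in>delta_out V {u}. split_tour_flow r P1 v P2 e) =
     (if u = r then 2 else if u = v then 0 else of_bool (u \<in> set (P1 @ P2)))"
  using distinct
  by (auto simp: split_tour_flow_def sum.distrib butlast_append
      sum_delta_out_count_walk_edges[OF finite split_tour_paths(1,2)]
      sum_delta_out_count_walk_edges[OF finite split_tour_paths(3,4)])

lemma sum_delta_in_split_tour_flow:
  "(\<Sum>e\<in>delta_in V {u}. split_tour_flow r P1 v P2 e) =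
     (if u = r then 0 else if u = v then 2 else of_bool (u \<in> set (P1 @ P2)))"
  using distinct
  by (auto simp: split_tour_flow_def sum.distrib
      sum_delta_in_count_walk_edges[OF finite split_tour_paths(1,2)]
      sum_delta_in_count_walk_edges[OF finite split_tour_paths(3,4)])

lemma one_le_sum_delta_in_split_tour_flow:
  assumes "r \<notin> S" "u \<in> S" "u \<in> set (P1 @ v # P2)"
  shows "1 \<le> (\<Sum>e\<in>delta_in V S. split_tour_flow r P1 v P2 e)"
proof -
  let ?fA = "\<lambda>e. real (count_list (walk_edges (r # P1 @ [v])) e)"
  let ?fB = "\<lambda>e. real (count_list (walk_edges (r # rev P2 @ [v])) e)"
  have "u \<in> set (r # P1 @ [v]) \<or> u \<in> set (r # rev P2 @ [v])"
    using assms(3) by auto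
  then have "1 \<le> sum ?fA (delta_in V S) \<or> 1 \<le> sum ?fB (delta_in V S)"
    using one_le_sum_delta_in_count_walk_edges[OF finite split_tour_paths(1,2), of S u]
      one_le_sum_delta_in_count_walk_edges[OF finite split_tour_paths(3,4), of S u] assms(1,2)
    by auto
  moreover have "0 \<le> sum ?fA (delta_in V S)" "0 \<le> sum ?fB (delta_in V S)"
    by (simp_all add: sum_nonneg)
  ultimately show ?thesis unfolding split_tour_flow_def sum.distrib by linarith
qed

lemma sum_dedges_cost_split_tour_flow:
  assumes "metric_on V c"
  shows "(\<Sum>e\<in>dedges V. c (fst e) (snd e) * split_tour_flow r P1 v P2 e)
    = walk_cost c (r # P1 @ v # P2 @ [r])"
proof -
  have "(\<Sum>e\<in>dedges V. c (fst e) (snd e) * split_tour_flow r P1 v P2 e)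
      = walk_cost c (r # P1 @ [v]) + walk_cost c (r # rev P2 @ [v])"
    by (simp add: split_tour_flow_def distrib_left sum.distrib
        sum_dedges_cost_count_walk_edges[OF finite split_tour_paths(1,2)]
        sum_dedges_cost_count_walk_edges[OF finite split_tour_paths(3,4)])
  also have "walk_cost c (r # rev P2 @ [v]) = walk_cost c (v # P2 @ [r])"
    using walk_cost_rev[OF assms split_tour_paths(4)] by simp
  also have "walk_cost c (r # P1 @ [v]) + \<dots> = walk_cost c (r # P1 @ v # P2 @ [r])"
    using walk_cost_append_Cons[of c "r # P1" v "P2 @ [r]"] by simp
  finally show ?thesis .
qed

end

section \<open>Commodities of the LP\<close>

text \<open>Constraints (1)--(3) and (5)--(7) of LP-CVRP-MD for the single commodity \<open>(r, v)\<close>;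
  only the covering constraint (4) couples different commodities.\<close>
definition lp_commodity ::
  "'a set \<Rightarrow> 'a set \<Rightarrow> ('a \<Rightarrow> 'a \<Rightarrow> real) \<Rightarrow> nat \<Rightarrow> 'a \<Rightarrow> 'a \<Rightarrow>
   ('a \<times> 'a \<Rightarrow> real) \<Rightarrow> ('a \<Rightarrow> real) \<Rightarrow> bool" where
  "lp_commodity C R c k r v y w \<longleftrightarrow>
     (let V = C \<union> R in
     (\<forall>e\<in>dedges V. 0 \<le> y e) \<and> (\<forall>u\<in>V. 0 \<le> w u) \<and>
     (\<forall>u\<in>V. (\<Sum>e\<in>delta_out V {u}. y e) = (if u = r then 2 * w v else if u = v then 0 else w u)) \<and>
     (\<forall>u\<in>V. (\<Sum>e\<in>delta_in V {u}. y e) = (if u = r then 0 else if u = v then 2 * w v else w u)) \<and>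
     (\<forall>u\<in>V. \<forall>S. u \<in> S \<and> S \<subseteq> V - {r} \<longrightarrow> w u \<le> (\<Sum>e\<in>delta_in V S. y e)) \<and>
     (\<forall>u\<in>C. w u \<le> w v) \<and>
     (\<forall>u\<in>C. c v r < c u r \<longrightarrow> w u = 0) \<and>
     (\<Sum>u\<in>C. w u) \<le> real k * w v)"

definition lp_cone ::
  "'a set \<Rightarrow> 'a set \<Rightarrow> ('a \<Rightarrow> 'a \<Rightarrow> real) \<Rightarrow> nat \<Rightarrow>
   ('a \<Rightarrow> 'a \<Rightarrow> 'a \<times> 'a \<Rightarrow> real) \<Rightarrow> ('a \<Rightarrow> 'a \<Rightarrow> 'a \<Rightarrow> real) \<Rightarrow> bool" where
  "lp_cone C R c k x z \<longleftrightarrow> (\<forall>r\<in>R. \<forall>v\<in>C. lp_commodity C R c k r v (x r v) (z r v))"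

lemma lp_feasible_iff_lp_cone:
  "lp_feasible C R c k x z \<longleftrightarrow>
     lp_cone C R c k x z \<and> (\<forall>u\<in>C. (\<Sum>r\<in>R. \<Sum>v\<in>C. z r v u) = 1)"
  unfolding lp_feasible_def lp_cone_def lp_commodity_def Let_def
  by (auto simp: ball_conj_distrib)

lemma lp_commodity_zero: "lp_commodity C R c k r v (\<lambda>_. 0) (\<lambda>_. 0)"
  by (simp add: lp_commodity_def)

lemma lp_commodity_add:
  assumes "lp_commodity C R c k r v y1 w1" "lp_commodity C R c k r v y2 w2"
  shows "lp_commodity C R c k r v (\<lambda>e. y1 e + y2 e) (\<lambda>u. w1 u + w2 u)"
  using assms unfolding lp_commodity_def Let_def
  by (simp add: sum.distrib distrib_left add_mono add_nonneg_nonneg)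

lemma lp_cone_zero: "lp_cone C R c k (\<lambda>_ _ _. 0) (\<lambda>_ _ _. 0)"
  by (simp add: lp_cone_def lp_commodity_zero)

lemma lp_cone_add:
  "lp_cone C R c k x1 z1 \<Longrightarrow> lp_cone C R c k x2 z2 \<Longrightarrow>
   lp_cone C R c k (\<lambda>r v e. x1 r v e + x2 r v e) (\<lambda>r v u. z1 r v u + z2 r v u)"
  by (simp add: lp_cone_def lp_commodity_add)

lemma lp_cost_add:
  "lp_cost C R c (\<lambda>r v e. x1 r v e + x2 r v e) = lp_cost C R c x1 + lp_cost C R c x2"
  by (simp add: lp_cost_def distrib_left sum.distrib)

context
  fixes C R :: "'a set" and r v :: 'a
  assumes finite: "finite C" "finite R" and mem: "r \<in> R" "v \<in> C"
begin

lemma sum_sum_if_commodity: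
  "(\<Sum>r'\<in>R. \<Sum>v'\<in>C. if r' = r \<and> v' = v then a else 0) = (a :: real)"
proof -
  have "(\<Sum>v'\<in>C. if r' = r \<and> v' = v then a else 0) = (if r' = r then a else 0)" for r'
    using finite mem by (cases "r' = r") simp_all
  then show ?thesis using finite mem by simp
qed

lemma lp_cone_single_commodity:
  assumes "lp_commodity C R c k r v y w"
  shows "lp_cone C R c k (\<lambda>r' v' e. if r' = r \<and> v' = v then y e else 0)
                         (\<lambda>r' v' u. if r' = r \<and> v' = v then w u else 0)"
  unfolding lp_cone_def
proof (intro ballI)
  fix r' v'
  show "lp_commodity C R c k r' v' (\<lambda>e. if r' = r \<and> v' = v then y e else 0)
                                  (\<lambda>u. if r' = r \<and> v' = v then w u else 0)"
    by (cases "r' = r"; cases "v' = v") (simp_all add: assms lp_commodity_zero)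
qed

lemma lp_cost_single_commodity:
  "lp_cost C R c (\<lambda>r' v' e. if r' = r \<and> v' = v then y e else 0)
     = (\<Sum>e\<in>dedges (C \<union> R). c (fst e) (snd e) * y e)"
proof -
  have "(\<Sum>e\<in>dedges (C \<union> R). c (fst e) (snd e) * (if r' = r \<and> v' = v then y e else 0))
      = (if r' = r \<and> v' = v then \<Sum>e\<in>dedges (C \<union> R). c (fst e) (snd e) * y e else 0)" for r' v'
    by (cases "r' = r"; cases "v' = v") simp_all
  then show ?thesis unfolding lp_cost_def by (simp add: sum_sum_if_commodity)
qed

end

lemma split_tour_lp_commodity:
  assumes "finite C" "finite R" "C \<inter> R = {}" "r \<in> R" "set P \<subseteq> C" "distinct P" "card (set P) \<le> k"
    and P: "P = P1 @ v # P2" and farthest: "\<forall>u\<in>set P. c u r \<le> c v r"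
  shows "lp_commodity C R c k r v (split_tour_flow r P1 v P2) (\<lambda>u. of_bool (u \<in> set P))"
proof -
  define V where "V = C \<union> R"
  have tour: "finite V" "distinct (r # P1 @ v # P2)" "set (r # P1 @ v # P2) \<subseteq> V"
    using assms unfolding V_def by auto
  have v: "v \<in> set P" using P by simp
  have w_eq: "of_bool (u \<in> set P) = (of_bool (u \<in> set (P1 @ P2)) :: real)" if "u \<noteq> v" for u
    using that P by simp
  have cut: "of_bool (u \<in> set P) \<le> (\<Sum>e\<in>delta_in V S. split_tour_flow r P1 v P2 e)"
    if "u \<in> S" "S \<subseteq> V - {r}" for u S
  proof (cases "u \<in> set P")
    case True
    then show ?thesis
      using one_le_sum_delta_in_split_tour_flow[OF tour, of S u] that P by auto
  qed (simp add: sum_nonneg split_tour_flow_def)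
  have "(\<Sum>u\<in>C. of_bool (u \<in> set P)) = real (card (set P))"
    using assms(1,5) by (simp add: Int_absorb1 flip: sum.inter_restrict)
  then have card: "(\<Sum>u\<in>C. of_bool (u \<in> set P)) \<le> real k * of_bool (v \<in> set P)"
    using assms(7) v by simp
  show ?thesis
    unfolding lp_commodity_def Let_def V_def[symmetric]
    using sum_delta_out_split_tour_flow[OF tour] sum_delta_in_split_tour_flow[OF tour]
      w_eq cut card v farthest
    by (auto simp: split_tour_flow_def not_le)
qed

lemma tour_lp_cone:
  assumes "finite C" "finite R" "C \<inter> R = {}" "metric_on (C \<union> R) c"
    and "r \<in> R" "set P \<subseteq> C" "distinct P" "card (set P) \<le> k"
  shows "\<exists>x z. lp_cone C R c k x z \<and>
     (\<forall>u\<in>C. (\<Sum>r'\<in>R. \<Sum>v\<in>C. z r' v u) = of_bool (u \<in> set P)) \<and>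
     lp_cost C R c x = tour_cost c (r, P)"
proof (cases "P = []")
  case True
  have "tour_cost c (r, P) = 0"
    using True metric_onD(1)[OF assms(4)] assms(5) by (simp add: tour_cost_def)
  then show ?thesis
    using True lp_cone_zero by (fastforce simp: lp_cost_def)
next
  case False
  obtain v where v: "v \<in> set P" "Max ((\<lambda>u. c u r) ` set P) = c v r"
    using obtains_MAX[of "set P" "\<lambda>u. c u r"] False by blast
  then have farthest: "\<forall>u\<in>set P. c u r \<le> c v r"
    by (metis Max_ge finite_imageI finite_set image_eqI)
  obtain P1 P2 where P: "P = P1 @ v # P2"
    using split_list[OF v(1)] by blast
  have vC: "v \<in> C" using v(1) assms(6) by auto
  have y: "lp_commodity C R c k r v (split_tour_flow r P1 v P2) (\<lambda>u. of_bool (u \<in> set P))"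
    using split_tour_lp_commodity[where c = c, OF assms(1-3,5-8) P farthest] .
  have "(\<Sum>e\<in>dedges (C \<union> R). c (fst e) (snd e) * split_tour_flow r P1 v P2 e) = tour_cost c (r, P)"
    using sum_dedges_cost_split_tour_flow[of "C \<union> R" r P1 v P2 c] assms P
    by (auto simp: tour_cost_def)
  then show ?thesis
    using lp_cone_single_commodity[OF assms(1,2,5) vC y] lp_cost_single_commodity[OF assms(1,2,5) vC]
      sum_sum_if_commodity[OF assms(1,2,5) vC]
    by (intro exI[of _ "\<lambda>r' v' e. if r' = r \<and> v' = v then split_tour_flow r P1 v P2 e else 0"]
        exI[of _ "\<lambda>r' v' u. if r' = r \<and> v' = v then of_bool (u \<in> set P) else 0"]) simp
qed

lemma tours_lp_cone:
  assumes "finite C" "finite R" "C \<inter> R = {}" "metric_on (C \<union> R) c"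
    and "\<forall>t\<in>set T. fst t \<in> R \<and> set (snd t) \<subseteq> C \<and> distinct (snd t) \<and> card (set (snd t)) \<le> k"
  shows "\<exists>x z. lp_cone C R c k x z \<and>
     (\<forall>u\<in>C. (\<Sum>r\<in>R. \<Sum>v\<in>C. z r v u) = (\<Sum>t\<leftarrow>T. of_bool (u \<in> set (snd t)))) \<and>
     lp_cost C R c x = sol_cost c T"
  using assms(5)
proof (induction T)
  case Nil
  then show ?case using lp_cone_zero by (fastforce simp: lp_cost_def sol_cost_def)
next
  case (Cons t T)
  obtain x1 z1 where 1: "lp_cone C R c k x1 z1"
    "\<forall>u\<in>C. (\<Sum>r\<in>R. \<Sum>v\<in>C. z1 r v u) = of_bool (u \<in> set (snd t))"
    "lp_cost C R c x1 = tour_cost c t"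
    using tour_lp_cone[OF assms(1-4), of "fst t" "snd t" k] Cons.prems by auto
  obtain x2 z2 where 2: "lp_cone C R c k x2 z2"
    "\<forall>u\<in>C. (\<Sum>r\<in>R. \<Sum>v\<in>C. z2 r v u) = (\<Sum>t\<leftarrow>T. of_bool (u \<in> set (snd t)))"
    "lp_cost C R c x2 = sol_cost c T"
    using Cons by auto
  show ?case
    using lp_cone_add[OF 1(1) 2(1)] 1(2) 2(2) 1(3) 2(3)
    by (intro exI[of _ "\<lambda>r v e. x1 r v e + x2 r v e"] exI[of _ "\<lambda>r v u. z1 r v u + z2 r v u"])
      (simp add: sum.distrib lp_cost_add sol_cost_def)
qed

fun prune_tours :: "('a \<times> 'a list) list \<Rightarrow> ('a \<times> 'a list) list" where
  "prune_tours [] = []"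
| "prune_tours (t # T) =
     (fst t, remdups (filter (\<lambda>u. u \<notin> (\<Union>s\<in>set T. set (snd s))) (snd t))) # prune_tours T"

lemma prune_tours_wf:
  assumes "\<forall>t\<in>set T. fst t \<in> R \<and> set (snd t) \<subseteq> C \<and> card (set (snd t)) \<le> k"
  shows "\<forall>t\<in>set (prune_tours T).
    fst t \<in> R \<and> set (snd t) \<subseteq> C \<and> distinct (snd t) \<and> card (set (snd t)) \<le> k"
  using assms
proof (induction T)
  case (Cons t T)
  have "card (set (filter (\<lambda>u. u \<notin> (\<Union>s\<in>set T. set (snd s))) (snd t))) \<le> card (set (snd t))"
    by (intro card_mono) auto
  then show ?case using Cons by auto
qed simp

lemma sum_list_prune_tours_visits:
  "(\<Sum>t\<leftarrow>prune_tours T. of_bool (u \<in> set (snd t))) = (of_bool (\<exists>t\<in>set T. u \<in> set (snd t)) :: real)"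
  by (induction T) auto

lemma subseq_remdups_filter: "subseq (remdups (filter P xs)) xs"
  by (induction xs) auto

lemma sol_cost_prune_tours_le:
  assumes "metric_on V c" "\<forall>t\<in>set T. fst t \<in> V \<and> set (snd t) \<subseteq> V"
  shows "sol_cost c (prune_tours T) \<le> sol_cost c T"
  using assms(2)
proof (induction T)
  case (Cons t T)
  have "tour_cost c (fst t, remdups (filter (\<lambda>u. u \<notin> (\<Union>s\<in>set T. set (snd s))) (snd t)))
      \<le> tour_cost c t"
    unfolding tour_cost_def using Cons.prems
    by (auto intro: walk_cost_subseq_mono[OF assms(1) subseq_remdups_filter])
  then show ?case using Cons by (simp add: sol_cost_def)
qed (simp add: sol_cost_def)

section \<open>The two bounds\<close>

lemma lp_cost_nonneg:
  assumes "metric_on (C \<union> R) c" "lp_feasible C R c k x z"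
  shows "0 \<le> lp_cost C R c x"
proof -
  have "0 \<le> x r v e" "0 \<le> c (fst e) (snd e)" if "r \<in> R" "v \<in> C" "e \<in> dedges (C \<union> R)" for r v e
    using that assms metric_onD(2)[OF assms(1)]
    by (auto simp: lp_feasible_def Let_def dedges_def)
  then show ?thesis
    unfolding lp_cost_def by (intro sum_nonneg mult_nonneg_nonneg) auto
qed

lemma lp_opt_le_lp_cost:
  assumes "metric_on (C \<union> R) c" "lp_feasible C R c k x z"
  shows "lp_opt C R c k \<le> lp_cost C R c x"
  unfolding lp_opt_def
proof (rule cInf_lower)
  show "bdd_below {lp_cost C R c x | x z. lp_feasible C R c k x z}"
    using lp_cost_nonneg[OF assms(1)] by (auto intro: bdd_belowI[of _ 0])
qed (use assms(2) in blast)

lemma lp_opt_le_sol_cost: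
  assumes "finite C" "finite R" "C \<inter> R = {}" "metric_on (C \<union> R) c" "cvrp_feasible C R k T"
  shows "lp_opt C R c k \<le> sol_cost c T"
proof -
  have tours: "\<forall>t\<in>set T. fst t \<in> R \<and> set (snd t) \<subseteq> C \<and> card (set (snd t)) \<le> k"
    and covered: "\<forall>u\<in>C. \<exists>t\<in>set T. u \<in> set (snd t)"
    using assms(5) by (auto simp: cvrp_feasible_def)
  obtain x z where "lp_cone C R c k x z"
    and cover: "\<forall>u\<in>C. (\<Sum>r\<in>R. \<Sum>v\<in>C. z r v u) = (\<Sum>t\<leftarrow>prune_tours T. of_bool (u \<in> set (snd t)))"
    and cost: "lp_cost C R c x = sol_cost c (prune_tours T)"
    using tours_lp_cone[OF assms(1-4) prune_tours_wf[OF tours]] by blast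
  then have "lp_feasible C R c k x z"
    using covered by (simp add: lp_feasible_iff_lp_cone sum_list_prune_tours_visits)
  then have "lp_opt C R c k \<le> sol_cost c (prune_tours T)"
    using lp_opt_le_lp_cost[OF assms(4)] cost by metis
  also have "\<dots> \<le> sol_cost c T"
    using sol_cost_prune_tours_le[OF assms(4)] tours by blast
  finally show ?thesis .
qed

lemma lp_opt_le_cvrp_opt:
  assumes "finite C" "finite R" "R \<noteq> {}" "C \<inter> R = {}" "metric_on (C \<union> R) c" "k \<ge> 1"
  shows "lp_opt C R c k \<le> cvrp_opt C R c k"
  unfolding cvrp_opt_def
proof (rule cInf_greatest)
  obtain r where "r \<in> R" using assms(3) by blast
  moreover obtain us where "set us = C" using finite_list[OF assms(1)] by blast
  ultimately have "cvrp_feasible C R k (map (\<lambda>u. (r, [u])) us)"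
    using assms(6) by (auto simp: cvrp_feasible_def)
  then show "sol_cost c ` {T. cvrp_feasible C R k T} \<noteq> {}" by blast
qed (use lp_opt_le_sol_cost[OF assms(1,2,4,5)] in blast)

lemma capacity_bound_le_radial_cost:
  assumes "finite R" "k \<ge> 1" "metric_on (C \<union> R) c" "lp_feasible C R c k x z"
  shows "2 / real k * (\<Sum>u\<in>C. dist_set c u R) \<le> (\<Sum>r\<in>R. \<Sum>v\<in>C. 2 * c v r * z r v v)"
proof -
  have z_nonneg: "\<forall>r\<in>R. \<forall>v\<in>C. \<forall>u\<in>C. 0 \<le> z r v u"
    and cover: "\<forall>u\<in>C. (\<Sum>r\<in>R. \<Sum>v\<in>C. z r v u) = 1"
    and nearer: "\<forall>r\<in>R. \<forall>u\<in>C. \<forall>v\<in>C. c u r > c v r \<longrightarrow> z r v u = 0"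
    and capacity: "\<forall>r\<in>R. \<forall>v\<in>C. (\<Sum>u\<in>C. z r v u) \<le> real k * z r v v"
    using assms(4) unfolding lp_feasible_def Let_def by auto
  have dist_le: "dist_set c u R \<le> c u r" if "r \<in> R" for u r
    unfolding dist_set_def using that assms(1) by (intro Min_le) auto
  have assigned: "z r v u * dist_set c u R \<le> z r v u * c v r" if "r \<in> R" "v \<in> C" "u \<in> C" for r v u
  proof (cases "c u r > c v r")
    case False
    then show ?thesis
      using dist_le[OF that(1), of u] z_nonneg that by (intro mult_left_mono) auto
  qed (use nearer that in simp)
  have "(\<Sum>u\<in>C. dist_set c u R) = (\<Sum>u\<in>C. (\<Sum>r\<in>R. \<Sum>v\<in>C. z r v u) * dist_set c u R)"
    using cover by simp
  also have "\<dots> = (\<Sum>u\<in>C. \<Sum>r\<in>R. \<Sum>v\<in>C. z r v u * dist_set c u R)"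
    by (simp add: sum_distrib_right)
  also have "\<dots> = (\<Sum>r\<in>R. \<Sum>u\<in>C. \<Sum>v\<in>C. z r v u * dist_set c u R)"
    by (rule sum.swap)
  also have "\<dots> = (\<Sum>r\<in>R. \<Sum>v\<in>C. \<Sum>u\<in>C. z r v u * dist_set c u R)"
    by (rule sum.cong[OF refl], rule sum.swap)
  also have "\<dots> \<le> (\<Sum>r\<in>R. \<Sum>v\<in>C. c v r * (\<Sum>u\<in>C. z r v u))"
    using assigned by (simp add: sum_distrib_left mult.commute sum_mono)
  also have "\<dots> \<le> (\<Sum>r\<in>R. \<Sum>v\<in>C. c v r * (real k * z r v v))"
    using capacity metric_onD(2)[OF assms(3)] by (intro sum_mono mult_left_mono) auto
  also have "\<dots> = real k / 2 * (\<Sum>r\<in>R. \<Sum>v\<in>C. 2 * c v r * z r v v)"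
    by (simp add: sum_distrib_left algebra_simps)
  finally show ?thesis
    using assms(2) by (simp add: field_simps)
qed

theorem lemma2:
  fixes C R :: "'a set" and c :: "'a \<Rightarrow> 'a \<Rightarrow> real" and k :: nat
    and x :: "'a \<Rightarrow> 'a \<Rightarrow> 'a \<times> 'a \<Rightarrow> real" and z :: "'a \<Rightarrow> 'a \<Rightarrow> 'a \<Rightarrow> real"
    and \<delta> :: real
  assumes "finite C" "finite R" "C \<noteq> {}" "R \<noteq> {}" "C \<inter> R = {}"
    and "metric_on (C \<union> R) c"
    and "k \<ge> 1"
    and "\<forall>v\<in>C. dist_set c v R > 0"
    and "lp_optimal C R c k x z"
    and "(\<Sum>r\<in>R. \<Sum>v\<in>C. 2 * c v r * z r v v) = (1 - \<delta>) * lp_opt C R c k"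
  shows "lp_opt C R c k \<le> cvrp_opt C R c k
       \<and> 2 / real k * (\<Sum>v\<in>C. dist_set c v R) \<le> (1 - \<delta>) * lp_opt C R c k"
proof
  show "lp_opt C R c k \<le> cvrp_opt C R c k"
    using lp_opt_le_cvrp_opt[OF assms(1,2,4-7)] .
  have "lp_feasible C R c k x z"
    using assms(9) by (simp add: lp_optimal_def)
  from capacity_bound_le_radial_cost[OF assms(2,7,6) this]
  show "2 / real k * (\<Sum>v\<in>C. dist_set c v R) \<le> (1 - \<delta>) * lp_opt C R c k"
    unfolding assms(10) .
qed

end
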